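(* Let $A$ be a finite set with $|A|=n$ and let $f:A\to A$ be a bijection. Then there exists a binary operation $*$ on $A$ such that $(A,* )$ is a cyclic group and $f$ is an automorphism of $(A,* )$ if and only if either $f$ is the identity map, or there is an index $i$ with $2\le i\le \phi(n)$ such that, writing $\ell_i=\mathrm{ord}_n(k_i)$ and letting $\ell_i>\lambda_1>\cdots>\lambda_t>1$ be the complete list of positive divisors of $\ell_i$ that are greater than $1$, the bijection $f$ has exactly $[U_n:\langle k_i\rangle]+L_{i,\ell_i}$ cycles of length $\ell_i$, exactly $L_{i,\lambda_j}$ cycles of length $\lambda_j$ for each $j=1,\dots,t$, exactly $L_{i,1}+1$ cycles of length $1$ (fixed points), and no other cycles.
   Context: For a bijection $f$ of a finite set, a cycle is a sequence $a_1,\dots,a_m$ of distinct elements with $f(a_j)=a_{j+1}$ for $j<m$ and $f(a_m)=a_1$; its length is $m$; every element lies in exactly one cycle. $\phi$ is Euler's totient function. In the ring $\mathbb{Z}_n=\{0,1,\dots,n-1\}$, let $U_n=\{k\in\mathbb{Z}_n:\gcd(k,n)=1\}$ be the unit group, enumerated as $U_n=\{k_1,k_2,\dots,k_{\phi(n)}\}$ with $k_1=1$. Let $T_n=\mathbb{Z}_n\setminus(U_n\cup\{0\})$, and for $z\in T_n$ put $z'=n/\gcd(z,n)$. For integers $m\ge1$ and $k$ coprime to $m$, $\mathrm{ord}_m(k)$ denotes the least $x\in\mathbb{N}$ with $k^x\equiv1\pmod m$. $\langle k_i\rangle$ is the cyclic subgroup of $U_n$ generated by $k_i$ and $[U_n:\langle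 k_i\rangle]$ its index. For a positive divisor $\lambda$ of $\ell_i$, define $L_{i,\lambda}=\frac{1}{\lambda}\left|\{z\in T_n:\mathrm{ord}_{z'}(k_i)=\lambda\}\right|$. *)

theory Defs
  imports "HOL-Number_Theory.Number_Theory" "HOL-Algebra.Elementary_Groups"
begin

(* The cycle of f through a: the set of iterates f^j(a). For a bijection of a
   finite set this is exactly the set of elements of the cycle containing a. *)
definition cycle_of :: "('a \<Rightarrow> 'a) \<Rightarrow> 'a \<Rightarrow> 'a set" where
  "cycle_of f a = {(f ^^ j) a | j. True}"

definition num_cycles :: "'a set \<Rightarrow> ('a \<Rightarrow> 'a) \<Rightarrow> nat \<Rightarrow> nat" where
  "num_cycles A f m = card {cycle_of f a | a. a \<in> A \<and> card (cycle_of f a) = m}"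

definition units_Zn :: "nat \<Rightarrow> nat set" where
  "units_Zn n = {k. k < n \<and> coprime k n}"

definition Tn :: "nat \<Rightarrow> nat set" where
  "Tn n = {z. z < n \<and> z \<notin> units_Zn n \<and> z \<noteq> 0}"

definition cyc_sub :: "nat \<Rightarrow> nat \<Rightarrow> nat set" where
  "cyc_sub n k = {k ^ j mod n | j. True}"

definition unit_index :: "nat \<Rightarrow> nat \<Rightarrow> nat" where
  "unit_index n k = card {(\<lambda>h. (h * x) mod n) ` cyc_sub n k | x. x \<in> units_Zn n}"

definition Lcount :: "nat \<Rightarrow> nat \<Rightarrow> nat \<Rightarrow> real" where
  "Lcount n k lam = real (card {z \<in> Tn n. ord (n div gcd z n) k = lam}) / real lam"

end

theory Submission
  imports Defs "HOL-Algebra.Multiplicative_Group"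
begin

text \<open>
  A cyclic group structure on A is the same thing as a bijection \<phi> from Z_n = {0..<n} onto A
  (transport the addition of Z_n), and the automorphisms of Z_n are the maps j \<mapsto> k j mod n with
  k a unit. Hence f is an automorphism of some cyclic group structure on A iff f is conjugate,
  via such a \<phi>, to multiplication by a unit k. Two bijections of finite sets are conjugate iff
  they have the same number of cycles of each length, so it remains to count the cycles of
  multiplication by k: the cycle through x has length ord_(n/gcd(x,n))(k). Thus 0 is a fixed
  point, the units fall into [U_n : <k>] cycles of length ord_n(k), and T_n contributes
  L_(k,\<lambda>) cycles of length \<lambda>. The unit k = 1 gives the identity map.
\<close>

section \<open>Cycles of a bijection of a finite set\<close>

lemma funpow_in_cycle_of [simp]: "(f ^^ j) a \<in> cycle_of f a"
  by (auto simp: cycle_of_def)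

lemma self_in_cycle_of [simp]: "a \<in> cycle_of f a"
  using funpow_in_cycle_of[where j = 0] by simp

lemma funpow_add_apply: "(f ^^ (m + n)) a = (f ^^ m) ((f ^^ n) a)"
  by (simp add: funpow_add)

lemma cycle_of_subset_cycle_of: "x \<in> cycle_of f a \<Longrightarrow> cycle_of f x \<subseteq> cycle_of f a"
  by (auto simp: cycle_of_def funpow_add_apply[symmetric])

lemma apply_in_cycle_of: "x \<in> cycle_of f a \<Longrightarrow> f x \<in> cycle_of f a"
  by (auto simp: cycle_of_def intro: exI[of _ "Suc _"])

definition cycle_period :: "('a \<Rightarrow> 'a) \<Rightarrow> 'a \<Rightarrow> nat" where
  "cycle_period f a = (LEAST p. 0 < p \<and> (f ^^ p) a = a)"

lemma num_cycles_pos_iff: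
  "finite A \<Longrightarrow> 0 < num_cycles A f m \<longleftrightarrow> (\<exists>a\<in>A. card (cycle_of f a) = m)"
  by (auto simp: num_cycles_def card_gt_0_iff)

context
  fixes A :: "'a set" and f :: "'a \<Rightarrow> 'a"
  assumes bij: "bij_betw f A A"
begin

lemma funpow_closed: "a \<in> A \<Longrightarrow> (f ^^ j) a \<in> A"
  using bij_betw_apply[OF bij_betw_funpow[OF bij]] .

lemma cycle_of_subset: "a \<in> A \<Longrightarrow> cycle_of f a \<subseteq> A"
  by (auto simp: cycle_of_def funpow_closed)

lemma funpow_cancel: "a \<in> A \<Longrightarrow> b \<in> A \<Longrightarrow> (f ^^ i) a = (f ^^ i) b \<Longrightarrow> a = b"
  using bij_betw_funpow[OF bij, of i] by (auto simp: bij_betw_def dest: inj_onD)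

lemma funpow_diff_eq:
  assumes "a \<in> A" "i \<le> j" "(f ^^ i) a = (f ^^ j) a"
  shows "(f ^^ (j - i)) a = a"
proof -
  have "(f ^^ i) ((f ^^ (j - i)) a) = (f ^^ i) a"
    using assms by (simp flip: funpow_add_apply)
  then show ?thesis
    using funpow_cancel assms(1) funpow_closed by blast
qed

end

context
  fixes A :: "'a set" and f :: "'a \<Rightarrow> 'a"
  assumes fin: "finite A" and bij: "bij_betw f A A"
begin

lemma ex_funpow_eq_self:
  assumes "a \<in> A" shows "\<exists>p>0. (f ^^ p) a = a"
proof -
  have "(\<lambda>j. (f ^^ j) a) ` {..card A} \<subseteq> A"
    using funpow_closed[OF bij] assms by auto
  then have "\<not> inj_on (\<lambda>j. (f ^^ j) a) {..card A}"
    using card_inj_on_le[OF _ _ fin] by fastforce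
  then obtain i j where "i \<noteq> j" "(f ^^ i) a = (f ^^ j) a"
    by (auto simp: inj_on_def)
  then obtain i j where "i < j" "(f ^^ i) a = (f ^^ j) a"
    by (metis nat_neq_iff)
  then show ?thesis
    using funpow_diff_eq[OF bij assms] by (intro exI[of _ "j - i"]) auto
qed

lemma cycle_period_pos: "a \<in> A \<Longrightarrow> 0 < cycle_period f a"
  and funpow_cycle_period: "a \<in> A \<Longrightarrow> (f ^^ cycle_period f a) a = a"
  using LeastI_ex[OF ex_funpow_eq_self] by (auto simp: cycle_period_def)

lemma funpow_eq_iff_mod_cycle_period:
  assumes "a \<in> A"
  shows "(f ^^ i) a = (f ^^ j) a \<longleftrightarrow> i mod cycle_period f a = j mod cycle_period f a"
proof -
  let ?p = "cycle_period f a"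
  have reduce: "(f ^^ i) a = (f ^^ (i mod ?p)) a" for i
    using funpow_mod_eq[OF funpow_cycle_period[OF assms]] by simp
  have inj: "u = v" if uv: "u < ?p" "v < ?p" "(f ^^ u) a = (f ^^ v) a" for u v
  proof (rule ccontr)
    assume "u \<noteq> v"
    then obtain u' v' where "u' < v'" "v' < ?p" "(f ^^ u') a = (f ^^ v') a"
      using uv by (metis nat_neq_iff)
    then have "(f ^^ (v' - u')) a = a" "0 < v' - u'" "v' - u' < ?p"
      using funpow_diff_eq[OF bij assms] by auto
    then show False
      using not_less_Least[of "v' - u'" "\<lambda>p. 0 < p \<and> (f ^^ p) a = a"]
      by (simp add: cycle_period_def)
  qed
  show ?thesis
    using reduce[of i] reduce[of j] inj[of "i mod ?p" "j mod ?p"] cycle_period_pos[OF assms]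
    by auto
qed

lemma bij_betw_funpow_cycle_of:
  assumes "a \<in> A"
  shows "bij_betw (\<lambda>j. (f ^^ j) a) {..<cycle_period f a} (cycle_of f a)"
proof (rule bij_betw_imageI)
  show "inj_on (\<lambda>j. (f ^^ j) a) {..<cycle_period f a}"
    by (auto simp: inj_on_def funpow_eq_iff_mod_cycle_period[OF assms])
  have "(f ^^ j) a \<in> (\<lambda>j. (f ^^ j) a) ` {..<cycle_period f a}" for j
    using cycle_period_pos[OF assms]
    by (intro image_eqI[of _ _ "j mod cycle_period f a"])
       (auto simp: funpow_eq_iff_mod_cycle_period[OF assms])
  then show "(\<lambda>j. (f ^^ j) a) ` {..<cycle_period f a} = cycle_of f a"
    by (auto simp: cycle_of_def)
qed

lemma card_cycle_of: "a \<in> A \<Longrightarrow> card (cycle_of f a) = cycle_period f a"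
  using bij_betw_same_card[OF bij_betw_funpow_cycle_of] by simp

lemma finite_cycle_of: "a \<in> A \<Longrightarrow> finite (cycle_of f a)"
  using finite_subset[OF cycle_of_subset[OF bij] fin] .

lemma cycle_of_eq:
  assumes "a \<in> A" "b \<in> cycle_of f a"
  shows "cycle_of f b = cycle_of f a"
proof -
  let ?p = "cycle_period f a"
  obtain i where b: "b = (f ^^ i) a"
    using assms(2) by (auto simp: cycle_of_def)
  have "(f ^^ (i * (?p - 1))) b = (f ^^ (i * (?p - 1) + i)) a"
    by (simp add: b funpow_add_apply)
  also have "i * (?p - 1) + i = i * ?p"
    using cycle_period_pos[OF assms(1)] by (simp add: algebra_simps)
  also have "(f ^^ (i * ?p)) a = a"
    using funpow_eq_iff_mod_cycle_period[OF assms(1), of "i * ?p" 0] by simp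
  finally have "a \<in> cycle_of f b"
    using funpow_in_cycle_of by metis
  show ?thesis
    using cycle_of_subset_cycle_of[OF assms(2)] cycle_of_subset_cycle_of[OF \<open>a \<in> cycle_of f b\<close>]
    by (rule equalityI)
qed

lemma cycle_of_disjoint:
  assumes "a \<in> A" "b \<in> A" "cycle_of f a \<noteq> cycle_of f b"
  shows "cycle_of f a \<inter> cycle_of f b = {}"
proof (rule ccontr)
  assume "cycle_of f a \<inter> cycle_of f b \<noteq> {}"
  then obtain x where x: "x \<in> cycle_of f a" "x \<in> cycle_of f b"
    by blast
  then show False
    using cycle_of_eq[OF assms(1) x(1)] cycle_of_eq[OF assms(2) x(2)] assms(3) by simp
qed

lemma bij_betw_cycle_of: "a \<in> A \<Longrightarrow> bij_betw f (cycle_of f a) (cycle_of f a)"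
proof -
  assume a: "a \<in> A"
  have "f ` cycle_of f a \<subseteq> cycle_of f a"
    using apply_in_cycle_of by (rule image_subsetI)
  moreover have "inj_on f (cycle_of f a)"
    using inj_on_subset[OF bij_betw_imp_inj_on[OF bij] cycle_of_subset[OF bij a]] .
  ultimately show ?thesis
    using endo_inj_surj[OF finite_cycle_of[OF a]] by (simp add: bij_betw_def)
qed

lemma bij_betw_Diff_cycle_of:
  "a \<in> A \<Longrightarrow> bij_betw f (A - cycle_of f a) (A - cycle_of f a)"
  using bij_betw_DiffI[OF bij bij_betw_cycle_of cycle_of_subset[OF bij] cycle_of_subset[OF bij]] .

lemma card_points_in_cycles_of_length:
  assumes "S \<subseteq> A" and closed: "\<And>a. a \<in> S \<Longrightarrow> cycle_of f a \<subseteq> S"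
  shows "m * card {cycle_of f a | a. a \<in> S \<and> card (cycle_of f a) = m}
           = card {a \<in> S. card (cycle_of f a) = m}"
proof -
  let ?C = "{cycle_of f a | a. a \<in> S \<and> card (cycle_of f a) = m}"
  have union: "\<Union>?C = {a \<in> S. card (cycle_of f a) = m}"
  proof (intro equalityI subsetI)
    fix x assume "x \<in> \<Union>?C"
    then obtain a where "a \<in> S" "card (cycle_of f a) = m" "x \<in> cycle_of f a"
      by blast
    then show "x \<in> {a \<in> S. card (cycle_of f a) = m}"
      using closed cycle_of_eq[of a x] \<open>S \<subseteq> A\<close> by auto
  next
    fix x assume "x \<in> {a \<in> S. card (cycle_of f a) = m}"
    then show "x \<in> \<Union>?C"
      by (intro UnionI[of "cycle_of f x"]) auto
  qed
  have "finite S"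
    using finite_subset[OF \<open>S \<subseteq> A\<close> fin] .
  have "m * card ?C = card (\<Union>?C)"
  proof (rule card_partition)
    show "finite ?C" "finite (\<Union>?C)"
      using \<open>finite S\<close> by (simp_all add: union)
  next
    fix c1 c2 assume "c1 \<in> ?C" "c2 \<in> ?C" "c1 \<noteq> c2"
    then obtain a1 a2 where "a1 \<in> S" "a2 \<in> S" "c1 = cycle_of f a1" "c2 = cycle_of f a2"
      by blast
    then show "c1 \<inter> c2 = {}"
      using cycle_of_disjoint \<open>S \<subseteq> A\<close> \<open>c1 \<noteq> c2\<close> by auto
  qed auto
  then show ?thesis
    unfolding union .
qed

lemma num_cycles_0: "num_cycles A f 0 = 0"
  using num_cycles_pos_iff[OF fin, of f 0] card_cycle_of cycle_period_pos by fastforce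

lemma num_cycles_Diff_cycle_of:
  assumes "a \<in> A"
  shows "num_cycles (A - cycle_of f a) f m
           = (if m = card (cycle_of f a) then num_cycles A f m - 1 else num_cycles A f m)"
proof -
  let ?S = "{cycle_of f x | x. x \<in> A \<and> card (cycle_of f x) = m}"
  have "{cycle_of f x | x. x \<in> A - cycle_of f a \<and> card (cycle_of f x) = m}
          = ?S - {cycle_of f a}"
  proof (intro equalityI subsetI)
    fix c assume "c \<in> {cycle_of f x | x. x \<in> A - cycle_of f a \<and> card (cycle_of f x) = m}"
    then obtain x where "x \<in> A" "x \<notin> cycle_of f a" "c = cycle_of f x" "card c = m"
      by blast
    then show "c \<in> ?S - {cycle_of f a}"
      using self_in_cycle_of[of x f] by auto
  next
    fix c assume "c \<in> ?S - {cycle_of f a}"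
    then obtain x where "x \<in> A" "c = cycle_of f x" "card c = m" "c \<noteq> cycle_of f a"
      by blast
    then show "c \<in> {cycle_of f x | x. x \<in> A - cycle_of f a \<and> card (cycle_of f x) = m}"
      using cycle_of_eq[OF assms, of x] by auto
  qed
  moreover have "cycle_of f a \<in> ?S \<longleftrightarrow> m = card (cycle_of f a)"
    using assms by auto
  ultimately show ?thesis
    unfolding num_cycles_def by (simp add: card_Diff_singleton_if)
qed

end

section \<open>Conjugate bijections\<close>

lemma funpow_conjugate:
  assumes "g ` B \<subseteq> B" "\<forall>x\<in>B. f (\<phi> x) = \<phi> (g x)" "x \<in> B"
  shows "(f ^^ j) (\<phi> x) = \<phi> ((g ^^ j) x)"
  using assms(3)
proof (induction j arbitrary: x)
  case (Suc j)
  then have "g x \<in> B"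
    using assms(1) by blast
  have "(f ^^ Suc j) (\<phi> x) = (f ^^ j) (\<phi> (g x))"
    using assms(2) Suc.prems by (simp add: funpow_Suc_right del: funpow.simps)
  also have "\<dots> = \<phi> ((g ^^ Suc j) x)"
    using Suc.IH[OF \<open>g x \<in> B\<close>] by (simp add: funpow_Suc_right del: funpow.simps)
  finally show ?case .
qed simp

lemma cycle_of_conjugate:
  assumes "g ` B \<subseteq> B" "\<forall>x\<in>B. f (\<phi> x) = \<phi> (g x)" "x \<in> B"
  shows "cycle_of f (\<phi> x) = \<phi> ` cycle_of g x"
  by (auto simp: cycle_of_def funpow_conjugate[OF assms])

lemma num_cycles_conjugate:
  assumes "bij_betw g B B" "bij_betw \<phi> B A" "\<forall>x\<in>B. f (\<phi> x) = \<phi> (g x)"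
  shows "num_cycles A f m = num_cycles B g m"
proof -
  have inj: "inj_on \<phi> B" and A: "A = \<phi> ` B"
    using assms(2) by (auto simp: bij_betw_def)
  have cycle: "cycle_of f (\<phi> x) = \<phi> ` cycle_of g x" if "x \<in> B" for x
    using cycle_of_conjugate[OF bij_betw_imp_surj_on[OF assms(1), THEN equalityD1] assms(3) that] .
  have card: "card (cycle_of f (\<phi> x)) = card (cycle_of g x)" if "x \<in> B" for x
    using card_image[OF inj_on_subset[OF inj cycle_of_subset[OF assms(1) that]]] cycle[OF that]
    by simp
  have "{cycle_of f a | a. a \<in> A \<and> card (cycle_of f a) = m}
          = image \<phi> ` {cycle_of g x | x. x \<in> B \<and> card (cycle_of g x) = m}"
  proof (intro equalityI subsetI)
    fix c assume "c \<in> {cycle_of f a | a. a \<in> A \<and> card (cycle_of f a) = m}"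
    then obtain x where x: "x \<in> B" "c = cycle_of f (\<phi> x)" "card (cycle_of g x) = m"
      using A card by auto
    then have "c = \<phi> ` cycle_of g x"
      using cycle by simp
    with x show "c \<in> image \<phi> ` {cycle_of g x | x. x \<in> B \<and> card (cycle_of g x) = m}"
      by blast
  next
    fix c assume "c \<in> image \<phi> ` {cycle_of g x | x. x \<in> B \<and> card (cycle_of g x) = m}"
    then obtain x where x: "x \<in> B" "c = \<phi> ` cycle_of g x" "card (cycle_of g x) = m"
      by blast
    then have "c = cycle_of f (\<phi> x)" "card (cycle_of f (\<phi> x)) = m" "\<phi> x \<in> A"
      using cycle card A by auto
    then show "c \<in> {cycle_of f a | a. a \<in> A \<and> card (cycle_of f a) = m}"
      by blast
  qed
  moreover have "inj_on (image \<phi>) {cycle_of g x | x. x \<in> B \<and> card (cycle_of g x) = m}"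
    by (rule inj_on_subset[OF inj_on_image_Pow[OF inj]]) (use cycle_of_subset[OF assms(1)] in auto)
  ultimately show ?thesis
    unfolding num_cycles_def by (simp add: card_image)
qed

lemma bij_betw_conjugate:
  assumes "bij_betw \<phi> B A" "bij_betw f A A" "g ` B \<subseteq> B" "\<forall>x\<in>B. f (\<phi> x) = \<phi> (g x)"
  shows "bij_betw g B B"
proof (rule bij_betw_imageI)
  show "inj_on g B"
  proof (rule inj_onI)
    fix x y assume "x \<in> B" "y \<in> B" "g x = g y"
    then have "f (\<phi> x) = f (\<phi> y)"
      using assms(4) by simp
    then show "x = y"
      using \<open>x \<in> B\<close> \<open>y \<in> B\<close> assms(1,2) by (metis bij_betw_apply bij_betw_imp_inj_on inj_onD)
  qed
  show "g ` B = B"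
  proof (intro equalityI subsetI)
    fix y assume "y \<in> B"
    then obtain x where "x \<in> B" "\<phi> y = f (\<phi> x)"
      using assms(1,2) by (metis bij_betw_apply bij_betw_imp_surj_on imageE)
    then have "\<phi> y = \<phi> (g x)" "g x \<in> B"
      using assms(3,4) by auto
    then show "y \<in> g ` B"
      using \<open>y \<in> B\<close> \<open>x \<in> B\<close> assms(1) by (metis bij_betw_imp_inj_on imageI inj_onD)
  qed (use assms(3) in blast)
qed

lemma ex_conjugate_cycle_of:
  assumes "finite A" "bij_betw f A A" "a \<in> A" "finite B" "bij_betw g B B" "b \<in> B"
    and "card (cycle_of g b) = card (cycle_of f a)"
  shows "\<exists>\<psi>. bij_betw \<psi> (cycle_of g b) (cycle_of f a)
               \<and> (\<forall>x\<in>cycle_of g b. f (\<psi> x) = \<psi> (g x))"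
proof -
  define p where "p = cycle_period f a"
  have p: "cycle_period g b = p"
    using assms card_cycle_of by (metis p_def)
  let ?pow_f = "\<lambda>j. (f ^^ j) a" and ?pow_g = "\<lambda>j. (g ^^ j) b"
  have bij_f: "bij_betw ?pow_f {..<p} (cycle_of f a)"
    using bij_betw_funpow_cycle_of[OF assms(1-3)] by (simp add: p_def)
  have bij_g: "bij_betw ?pow_g {..<p} (cycle_of g b)"
    using bij_betw_funpow_cycle_of[OF assms(4-6)] by (simp add: p)
  define \<psi> where "\<psi> = ?pow_f \<circ> inv_into {..<p} ?pow_g"
  have \<psi>: "\<psi> ((g ^^ j) b) = (f ^^ j) a" for j
  proof -
    have "(g ^^ j) b = ?pow_g (j mod p)" "(f ^^ j) a = ?pow_f (j mod p)"
      using funpow_eq_iff_mod_cycle_period[OF assms(4-6)] funpow_eq_iff_mod_cycle_period[OF assms(1-3)]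
      by (simp_all add: p p_def)
    moreover have "j mod p < p"
      using cycle_period_pos[OF assms(1-3)] by (simp add: p_def)
    ultimately show ?thesis
      using inv_into_f_f[OF bij_betw_imp_inj_on[OF bij_g], of "j mod p"] by (simp add: \<psi>_def)
  qed
  have "bij_betw \<psi> (cycle_of g b) (cycle_of f a)"
    unfolding \<psi>_def using bij_betw_trans[OF bij_betw_inv_into[OF bij_g] bij_f] .
  moreover have "f (\<psi> x) = \<psi> (g x)" if x: "x \<in> cycle_of g b" for x
  proof -
    obtain j where "x = (g ^^ j) b"
      using x by (auto simp: cycle_of_def)
    then show ?thesis
      using \<psi>[of j] \<psi>[of "Suc j"] by simp
  qed
  ultimately show ?thesis
    by blast
qed

lemma ex_conjugate_glue:
  assumes "bij_betw \<psi> D C" "\<forall>x\<in>D. f (\<psi> x) = \<psi> (g x)"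
    and "bij_betw \<phi> (B - D) (A - C)" "\<forall>x\<in>B - D. f (\<phi> x) = \<phi> (g x)"
    and "D \<subseteq> B" "C \<subseteq> A" "g ` D \<subseteq> D" "g ` (B - D) \<subseteq> B - D"
  shows "\<exists>\<chi>. bij_betw \<chi> B A \<and> (\<forall>x\<in>B. f (\<chi> x) = \<chi> (g x))"
proof -
  define \<chi> where "\<chi> x = (if x \<in> D then \<psi> x else \<phi> x)" for x
  have "bij_betw \<chi> (D \<union> (B - D)) (C \<union> (A - C))"
    unfolding \<chi>_def by (rule bij_betw_disjoint_Un[OF assms(1,3)]) auto
  then have "bij_betw \<chi> B A"
    using assms(5,6) by (simp add: Un_absorb1)
  moreover have "f (\<chi> x) = \<chi> (g x)" if "x \<in> B" for x
  proof (cases "x \<in> D")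
    case True
    then show ?thesis
      using assms(2,7) by (auto simp: \<chi>_def)
  next
    case False
    then have "g x \<in> B - D"
      using assms(8) \<open>x \<in> B\<close> by blast
    then show ?thesis
      using assms(4) False \<open>x \<in> B\<close> by (simp add: \<chi>_def)
  qed
  ultimately show ?thesis
    by blast
qed

lemma ex_conjugate_if_num_cycles_eq:
  assumes "finite A" "bij_betw f A A" "finite B" "bij_betw g B B"
    and "\<forall>m. num_cycles A f m = num_cycles B g m"
  shows "\<exists>\<phi>. bij_betw \<phi> B A \<and> (\<forall>x\<in>B. f (\<phi> x) = \<phi> (g x))"
  using assms
proof (induction A arbitrary: B rule: finite_psubset_induct)
  case (psubset A)
  note bij_f = psubset.prems(1) and fin_B = psubset.prems(2) and bij_g = psubset.prems(3)
    and counts = psubset.prems(4)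
  show ?case
  proof (cases "A = {}")
    case True
    have "B = {}"
    proof (rule ccontr)
      assume "B \<noteq> {}"
      then obtain b where "b \<in> B"
        by blast
      then have "0 < num_cycles A f (card (cycle_of g b))"
        using num_cycles_pos_iff[OF fin_B, of g] counts by auto
      then show False
        using num_cycles_pos_iff[OF psubset.hyps, of f] True by simp
    qed
    with True show ?thesis
      by (simp add: bij_betw_def)
  next
    case False
    then obtain a where a: "a \<in> A"
      by blast
    let ?C = "cycle_of f a"
    have "0 < num_cycles B g (card ?C)"
      using num_cycles_pos_iff[OF psubset.hyps, of f] a counts by auto
    then obtain b where b: "b \<in> B" "card (cycle_of g b) = card ?C"
      using num_cycles_pos_iff[OF fin_B, of g] by blast
    let ?D = "cycle_of g b"
    obtain \<psi> where \<psi>: "bij_betw \<psi> ?D ?C" "\<forall>x\<in>?D. f (\<psi> x) = \<psi> (g x)"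
      using ex_conjugate_cycle_of[OF psubset.hyps bij_f a fin_B bij_g b] by blast
    have "A - ?C \<subset> A"
      using a self_in_cycle_of[of a f] by blast
    moreover have "\<forall>m. num_cycles (A - ?C) f m = num_cycles (B - ?D) g m"
      using num_cycles_Diff_cycle_of[OF psubset.hyps bij_f a]
        num_cycles_Diff_cycle_of[OF fin_B bij_g b(1)] counts b(2) by simp
    ultimately obtain \<phi> where \<phi>: "bij_betw \<phi> (B - ?D) (A - ?C)" "\<forall>x\<in>B - ?D. f (\<phi> x) = \<phi> (g x)"
      using psubset.IH[OF _ bij_betw_Diff_cycle_of[OF psubset.hyps bij_f a] _
          bij_betw_Diff_cycle_of[OF fin_B bij_g b(1)]] fin_B
      by blast
    show ?thesis
    proof (rule ex_conjugate_glue[OF \<psi> \<phi>])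
      show "?D \<subseteq> B" "?C \<subseteq> A"
        using cycle_of_subset[OF bij_g b(1)] cycle_of_subset[OF bij_f a] .
      show "g ` ?D \<subseteq> ?D"
        using apply_in_cycle_of by (rule image_subsetI)
      show "g ` (B - ?D) \<subseteq> B - ?D"
        using bij_betw_imp_surj_on[OF bij_betw_Diff_cycle_of[OF fin_B bij_g b(1)]] by simp
    qed
  qed
qed

lemma conjugate_iff_num_cycles_eq:
  assumes "finite A" "bij_betw f A A" "finite B" "bij_betw g B B"
  shows "(\<exists>\<phi>. bij_betw \<phi> B A \<and> (\<forall>x\<in>B. f (\<phi> x) = \<phi> (g x)))
           \<longleftrightarrow> (\<forall>m. num_cycles A f m = num_cycles B g m)"
proof
  assume "\<exists>\<phi>. bij_betw \<phi> B A \<and> (\<forall>x\<in>B. f (\<phi> x) = \<phi> (g x))"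
  then show "\<forall>m. num_cycles A f m = num_cycles B g m"
    using num_cycles_conjugate[OF assms(4)] by blast
qed (rule ex_conjugate_if_num_cycles_eq[OF assms])

section \<open>Multiplication by a unit modulo n\<close>

definition mult_mod :: "nat \<Rightarrow> nat \<Rightarrow> nat \<Rightarrow> nat" where
  "mult_mod n k j = j * k mod n"

lemma mult_mod_image_subset: "0 < n \<Longrightarrow> mult_mod n k ` {0..<n} \<subseteq> {0..<n}"
  by (auto simp: mult_mod_def)

lemma bij_betw_mult_mod_iff:
  assumes "0 < n"
  shows "bij_betw (mult_mod n k) {0..<n} {0..<n} \<longleftrightarrow> coprime k n"
proof
  assume "bij_betw (mult_mod n k) {0..<n} {0..<n}"
  moreover have "1 mod n \<in> {0..<n}"
    using assms by simp
  ultimately have "1 mod n \<in> mult_mod n k ` {0..<n}"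
    by (simp add: bij_betw_def)
  then obtain j where "mult_mod n k j = 1 mod n"
    by (metis imageE)
  then have "[k * j = Suc 0] (mod n)"
    unfolding mult_mod_def cong_def by (simp add: mult.commute)
  then show "coprime k n"
    unfolding coprime_iff_invertible_nat by blast
next
  assume "coprime k n"
  have "inj_on (mult_mod n k) {0..<n}"
  proof (rule inj_onI)
    fix i j assume "i \<in> {0..<n}" "j \<in> {0..<n}" "mult_mod n k i = mult_mod n k j"
    then have "[i * k = j * k] (mod n)"
      by (simp add: mult_mod_def cong_def)
    then have "[i = j] (mod n)"
      using cong_mult_rcancel_nat[OF \<open>coprime k n\<close>] by simp
    then show "i = j"
      using \<open>i \<in> {0..<n}\<close> \<open>j \<in> {0..<n}\<close> cong_less_modulus_unique_nat by simp
  qed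
  then show "bij_betw (mult_mod n k) {0..<n} {0..<n}"
    using endo_inj_surj[OF _ mult_mod_image_subset[OF assms]] by (simp add: bij_betw_def)
qed

lemma funpow_mult_mod: "x < n \<Longrightarrow> (mult_mod n k ^^ j) x = x * k ^ j mod n"
  by (induction j) (simp_all add: mult_mod_def mod_mult_right_eq ac_simps)

lemma div_gcd_dvd: "n div gcd x n dvd (n :: nat)"
  by (metis dvd_div_mult_self dvd_triv_left gcd_dvd2)

lemma mult_mod_eq_self_iff_cong:
  fixes n x c :: nat
  assumes "x < n"
  shows "x * c mod n = x \<longleftrightarrow> [c = 1] (mod n div gcd x n)"
proof -
  define d where "d = gcd x n"
  define n' where "n' = n div d"
  define x' where "x' = x div d"
  have "0 < d"
    using assms by (simp add: d_def)
  have n: "n = d * n'" and x: "x = d * x'"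
    by (simp_all add: n'_def x'_def d_def)
  have "coprime x' n'"
    unfolding x'_def n'_def d_def by (rule div_gcd_coprime) (use assms in simp)
  have "x * c mod n = x \<longleftrightarrow> x * c mod n = x mod n"
    using assms by simp
  also have "\<dots> \<longleftrightarrow> d * (x' * c mod n') = d * (x' mod n')"
    by (simp add: n x mod_mult_mult1 mult.assoc)
  also have "\<dots> \<longleftrightarrow> [x' * c = x' * 1] (mod n')"
    using \<open>0 < d\<close> by (simp add: cong_def)
  also have "\<dots> \<longleftrightarrow> [c = 1] (mod n')"
    using cong_mult_lcancel_nat[OF \<open>coprime x' n'\<close>] by blast
  finally show ?thesis
    by (simp add: n'_def d_def)
qed

lemma card_cycle_of_mult_mod:
  assumes "coprime k n" "x < n"
  shows "card (cycle_of (mult_mod n k) x) = ord (n div gcd x n) k"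
proof -
  have "0 < n"
    using assms(2) by simp
  have bij: "bij_betw (mult_mod n k) {0..<n} {0..<n}"
    using bij_betw_mult_mod_iff[OF \<open>0 < n\<close>] assms(1) by blast
  have "coprime (n div gcd x n) k"
    using div_gcd_dvd assms(1) by (metis coprime_commute coprime_divisors dvd_refl)
  have "card (cycle_of (mult_mod n k) x) = (LEAST p. 0 < p \<and> (mult_mod n k ^^ p) x = x)"
    using card_cycle_of[OF _ bij] assms(2) by (simp add: cycle_period_def)
  also have "\<dots> = (LEAST p. 0 < p \<and> [k ^ p = 1] (mod n div gcd x n))"
    using mult_mod_eq_self_iff_cong[OF assms(2)] by (simp add: funpow_mult_mod[OF assms(2)])
  also have "\<dots> = ord (n div gcd x n) k"
    using \<open>coprime (n div gcd x n) k\<close> by (simp add: ord_def)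
  finally show ?thesis .
qed

lemma card_cycle_of_mult_mod_unit:
  assumes "coprime k n" "x \<in> units_Zn n"
  shows "card (cycle_of (mult_mod n k) x) = ord n k"
proof -
  have "x < n" "gcd x n = 1"
    using assms(2) by (simp_all add: units_Zn_def)
  then show ?thesis
    using card_cycle_of_mult_mod[OF assms(1)] by simp
qed

lemma cycle_of_mult_mod_subset_units:
  assumes "coprime k n" "x \<in> units_Zn n"
  shows "cycle_of (mult_mod n k) x \<subseteq> units_Zn n"
proof
  fix y assume "y \<in> cycle_of (mult_mod n k) x"
  then obtain j where "y = (mult_mod n k ^^ j) x"
    by (auto simp: cycle_of_def)
  moreover have "x < n" "coprime (x * k ^ j) n"
    using assms by (simp_all add: units_Zn_def)
  ultimately have "y = x * k ^ j mod n" "y < n" "coprime y n"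
    by (simp_all add: funpow_mult_mod)
  then show "y \<in> units_Zn n"
    by (simp add: units_Zn_def)
qed

lemma unit_index_eq_card_cycles:
  "unit_index n k = card {cycle_of (mult_mod n k) x | x. x \<in> units_Zn n}"
proof -
  have "(\<lambda>h. h * x mod n) ` cyc_sub n k = cycle_of (mult_mod n k) x" if "x \<in> units_Zn n" for x
  proof -
    have pow: "k ^ j mod n * x mod n = (mult_mod n k ^^ j) x" for j
      using that by (simp add: units_Zn_def funpow_mult_mod mod_mult_right_eq mult.commute)
    show ?thesis
    proof (intro equalityI subsetI)
      fix y assume "y \<in> (\<lambda>h. h * x mod n) ` cyc_sub n k"
      then show "y \<in> cycle_of (mult_mod n k) x"
        using pow by (auto simp: cyc_sub_def cycle_of_def)
    next
      fix y assume "y \<in> cycle_of (mult_mod n k) x"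
      then obtain j where "y = k ^ j mod n * x mod n"
        using pow by (auto simp: cycle_of_def)
      moreover have "k ^ j mod n \<in> cyc_sub n k"
        by (auto simp: cyc_sub_def)
      ultimately show "y \<in> (\<lambda>h. h * x mod n) ` cyc_sub n k"
        by blast
    qed
  qed
  then show ?thesis
    unfolding unit_index_def setcompr_eq_image by (simp cong: image_cong)
qed

lemma card_units_Zn_eq:
  assumes "coprime k n" "0 < n"
  shows "card (units_Zn n) = ord n k * unit_index n k"
proof -
  let ?g = "mult_mod n k"
  have bij: "bij_betw ?g {0..<n} {0..<n}"
    using bij_betw_mult_mod_iff[OF assms(2)] assms(1) by blast
  have "units_Zn n \<subseteq> {0..<n}"
    by (auto simp: units_Zn_def)
  then have "ord n k * card {cycle_of ?g x | x. x \<in> units_Zn n \<and> card (cycle_of ?g x) = ord n k}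
               = card {x \<in> units_Zn n. card (cycle_of ?g x) = ord n k}"
    using card_points_in_cycles_of_length[OF _ bij] cycle_of_mult_mod_subset_units[OF assms(1)] by blast
  moreover have "{cycle_of ?g x | x. x \<in> units_Zn n \<and> card (cycle_of ?g x) = ord n k}
                   = {cycle_of ?g x | x. x \<in> units_Zn n}"
    "{x \<in> units_Zn n. card (cycle_of ?g x) = ord n k} = units_Zn n"
    using card_cycle_of_mult_mod_unit[OF assms(1)] by auto
  ultimately show ?thesis
    by (simp add: unit_index_eq_card_cycles)
qed

lemma card_points_in_cycles_of_length_mult_mod:
  assumes "coprime k n" "2 \<le> n"
  shows "card {x \<in> {0..<n}. card (cycle_of (mult_mod n k) x) = m}
           = of_bool (m = 1) + (if m = ord n k then card (units_Zn n) else 0)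
             + card {z \<in> Tn n. ord (n div gcd z n) k = m}"
proof -
  let ?P = "\<lambda>x. card (cycle_of (mult_mod n k) x) = m"
  define Z U T where "Z = {x \<in> {0}. ?P x}" and "U = {x \<in> units_Zn n. ?P x}"
    and "T = {x \<in> Tn n. ?P x}"
  have "{x \<in> {0..<n}. ?P x} = Z \<union> U \<union> T"
    using assms(2) by (auto simp: Z_def U_def T_def units_Zn_def Tn_def)
  moreover have "finite Z" "finite U" "finite T"
    by (simp_all add: Z_def U_def T_def units_Zn_def Tn_def)
  moreover have "(Z \<union> U) \<inter> T = {}" "Z \<inter> U = {}"
    using assms(2) by (auto simp: Z_def U_def T_def units_Zn_def Tn_def)
  ultimately have "card {x \<in> {0..<n}. ?P x} = card Z + card U + card T"
    by (simp add: card_Un_disjoint)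
  moreover have "Z = (if m = 1 then {0} else {})"
    using card_cycle_of_mult_mod[OF assms(1), of 0] assms(2) by (auto simp: Z_def)
  moreover have "U = (if m = ord n k then units_Zn n else {})"
    using card_cycle_of_mult_mod_unit[OF assms(1)] by (auto simp: U_def)
  moreover have "T = {z \<in> Tn n. ord (n div gcd z n) k = m}"
    using card_cycle_of_mult_mod[OF assms(1)] by (auto simp: T_def Tn_def)
  ultimately show ?thesis
    by simp
qed

lemma ord_dvd_ord_of_dvd:
  fixes d n k :: nat
  assumes "d dvd n"
  shows "ord d k dvd ord n k"
proof -
  have "[k ^ ord n k = 1] (mod n)"
    by (rule ord)
  then have "[k ^ ord n k = 1] (mod d)"
    using assms by (rule cong_dvd_modulus_nat)
  then show ?thesis
    by (simp only: ord_divides)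
qed

lemma two_le_modulus_if_not_cong_1:
  fixes k n :: nat
  assumes "coprime k n" "\<not> [k = 1] (mod n)"
  shows "2 \<le> n"
proof -
  have "n \<noteq> 0"
  proof
    assume "n = 0"
    then have "k = 1"
      using assms(1) by simp
    with \<open>n = 0\<close> show False
      using assms(2) by simp
  qed
  moreover have "n \<noteq> 1"
    using assms(2) by auto
  ultimately show ?thesis
    by simp
qed

lemma card_num_cycles_mult_mod:
  assumes "coprime k n" "2 \<le> n"
  shows "m * num_cycles {0..<n} (mult_mod n k) m
           = of_bool (m = 1) + (if m = ord n k then ord n k * unit_index n k else 0)
             + card {z \<in> Tn n. ord (n div gcd z n) k = m}"
proof -
  have bij: "bij_betw (mult_mod n k) {0..<n} {0..<n}"
    using bij_betw_mult_mod_iff assms by simp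
  have "m * num_cycles {0..<n} (mult_mod n k) m
          = card {x \<in> {0..<n}. card (cycle_of (mult_mod n k) x) = m}"
    unfolding num_cycles_def using cycle_of_subset[OF bij]
    by (intro card_points_in_cycles_of_length[OF _ bij]) auto
  then show ?thesis
    using card_points_in_cycles_of_length_mult_mod[OF assms] card_units_Zn_eq[OF assms(1)] assms(2)
    by simp
qed

lemma num_cycles_mult_mod:
  assumes "coprime k n" "\<not> [k = 1] (mod n)"
  shows "real (num_cycles {0..<n} (mult_mod n k) m)
           = (if m = ord n k then real (unit_index n k) + Lcount n k (ord n k)
              else if m = 1 then Lcount n k 1 + 1
              else if m dvd ord n k then Lcount n k m
              else 0)"
proof -
  have "2 \<le> n"
    using two_le_modulus_if_not_cong_1[OF assms] .
  have "ord n k \<noteq> 0" "ord n k \<noteq> 1"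
    using assms by (simp_all add: ord_eq_0 coprime_commute ord_eq_Suc_0_iff)
  show ?thesis
  proof (cases "m = 0")
    case True
    have "bij_betw (mult_mod n k) {0..<n} {0..<n}"
      using bij_betw_mult_mod_iff assms(1) \<open>2 \<le> n\<close> by simp
    with True show ?thesis
      using num_cycles_0[OF finite_atLeastLessThan] \<open>ord n k \<noteq> 0\<close> by (simp add: ord_eq_0)
  next
    case False
    let ?c = "card {z \<in> Tn n. ord (n div gcd z n) k = m}"
    have count: "real m * real (num_cycles {0..<n} (mult_mod n k) m)
        = of_bool (m = 1) + (if m = ord n k then real (ord n k) * real (unit_index n k) else 0)
          + real ?c"
      using card_num_cycles_mult_mod[OF assms(1) \<open>2 \<le> n\<close>, of m] by (simp flip: of_nat_mult)
    have "?c = 0" if "\<not> m dvd ord n k"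
    proof -
      have "{z \<in> Tn n. ord (n div gcd z n) k = m} = {}"
        using that ord_dvd_ord_of_dvd[OF div_gcd_dvd] by auto
      then show ?thesis
        by (simp only: card.empty)
    qed
    then show ?thesis
      using count False \<open>ord n k \<noteq> 1\<close> by (auto simp: Lcount_def field_simps)
  qed
qed

lemma mult_mod_cong_1: "[k = 1] (mod n) \<Longrightarrow> j < n \<Longrightarrow> mult_mod n k j = j"
  by (metis cong_def mod_less mod_mult_right_eq mult.right_neutral mult_mod_def)

lemma conjugate_to_id_iff:
  assumes "finite A" "card A = n"
  shows "(\<exists>\<phi>. bij_betw \<phi> {0..<n} A \<and> (\<forall>j\<in>{0..<n}. f (\<phi> j) = \<phi> j)) \<longleftrightarrow> (\<forall>a\<in>A. f a = a)"
proof
  assume "\<exists>\<phi>. bij_betw \<phi> {0..<n} A \<and> (\<forall>j\<in>{0..<n}. f (\<phi> j) = \<phi> j)"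
  then obtain \<phi> where \<phi>: "bij_betw \<phi> {0..<n} A" "\<forall>j\<in>{0..<n}. f (\<phi> j) = \<phi> j"
    by blast
  show "\<forall>a\<in>A. f a = a"
    using \<phi>(2) bij_betw_imp_surj_on[OF \<phi>(1)] by blast
next
  assume "\<forall>a\<in>A. f a = a"
  moreover obtain \<phi> where \<phi>: "bij_betw \<phi> {0..<n} A"
    using ex_bij_betw_nat_finite[OF assms(1)] assms(2) by blast
  ultimately have "\<forall>j\<in>{0..<n}. f (\<phi> j) = \<phi> j"
    using bij_betw_apply[OF \<phi>] by simp
  with \<phi> show "\<exists>\<phi>. bij_betw \<phi> {0..<n} A \<and> (\<forall>j\<in>{0..<n}. f (\<phi> j) = \<phi> j)"
    by blast
qed

lemma conjugate_mult_mod_unit_iff: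
  assumes "finite A" "card A = n" "bij_betw f A A" "k \<in> units_Zn n"
  shows "(\<exists>\<phi>. bij_betw \<phi> {0..<n} A \<and> (\<forall>j\<in>{0..<n}. f (\<phi> j) = \<phi> (mult_mod n k j)))
           \<longleftrightarrow> (if k = 1 mod n then \<forall>a\<in>A. f a = a
               else \<forall>m. num_cycles A f m = num_cycles {0..<n} (mult_mod n k) m)"
proof (cases "k = 1 mod n")
  case True
  then have "mult_mod n k j = j" if "j \<in> {0..<n}" for j
    using mult_mod_cong_1 that by (simp add: cong_def)
  with True show ?thesis
    using conjugate_to_id_iff[OF assms(1,2)] by simp
next
  case False
  have "0 < n" "coprime k n"
    using assms(4) by (auto simp: units_Zn_def)
  then have "bij_betw (mult_mod n k) {0..<n} {0..<n}"
    using bij_betw_mult_mod_iff by blast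
  with False show ?thesis
    using conjugate_iff_num_cycles_eq[OF assms(1,3) finite_atLeastLessThan] by (simp only: if_False)
qed

section \<open>Cyclic group structures and their automorphisms\<close>

lemma (in group) pow_eq_pow_iff_cong_ord:
  assumes "x \<in> carrier G"
  shows "x [^] (i :: nat) = x [^] (j :: nat) \<longleftrightarrow> [i = j] (mod ord x)"
proof -
  have "x [^] i = x [^] j \<longleftrightarrow> x [^] int i = x [^] int j"
    by (simp add: int_pow_int)
  also have "\<dots> \<longleftrightarrow> int (ord x) dvd (int j - int i)"
    using int_pow_eq[OF assms] .
  also have "\<dots> \<longleftrightarrow> [i = j] (mod ord x)"
    by (metis cong_iff_dvd_diff cong_int_iff cong_sym_eq)
  finally show ?thesis .
qed

lemma (in group) bij_betw_pow_generator:
  assumes "finite (carrier G)" "x \<in> carrier G" "subgroup_generated G {x} = G"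
  shows "bij_betw (\<lambda>j. x [^] j) {0..<order G} (carrier G)"
proof -
  have ord: "ord x = order G"
    using cyclic_order_is_ord[OF assms(2)] assms(3) by simp
  have inj: "inj_on (\<lambda>j. x [^] j) {0..<order G}"
  proof (rule inj_onI)
    fix i j assume "i \<in> {0..<order G}" "j \<in> {0..<order G}" "x [^] i = x [^] j"
    then show "i = j"
      using pow_eq_pow_iff_cong_ord[OF assms(2)] cong_less_modulus_unique_nat ord by auto
  qed
  have "(\<lambda>j. x [^] j) ` {0..<order G} \<subseteq> carrier G"
    using assms(2) by auto
  moreover have "card ((\<lambda>j. x [^] j) ` {0..<order G}) = card (carrier G)"
    using card_image[OF inj] by (simp add: order_def)
  ultimately have "(\<lambda>j. x [^] j) ` {0..<order G} = carrier G"
    using card_subset_eq[OF assms(1)] by blast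
  with inj show ?thesis
    by (simp add: bij_betw_def)
qed

lemma (in group) endomorphism_of_cyclic_eq_mult_mod:
  assumes "finite (carrier G)" "x \<in> carrier G" "subgroup_generated G {x} = G" "f \<in> hom G G"
  shows "\<exists>k < order G. \<forall>j. f (x [^] j) = x [^] mult_mod (order G) k j"
proof -
  have ord: "ord x = order G"
    using cyclic_order_is_ord[OF assms(2)] assms(3) by simp
  have "f x \<in> (\<lambda>j. x [^] j) ` {0..<order G}"
    using hom_in_carrier[OF assms(4,2)] bij_betw_imp_surj_on[OF bij_betw_pow_generator[OF assms(1-3)]]
    by simp
  then obtain k where k: "k < order G" "f x = x [^] k"
    by auto
  have "f (x [^] j) = x [^] mult_mod (order G) k j" for j
  proof -
    have "f (x [^] j) = x [^] (k * j)"
      using hom_nat_pow[OF assms(4,2) is_group is_group] k(2) assms(2) by (simp add: nat_pow_pow)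
    also have "\<dots> = x [^] mult_mod (order G) k j"
      using pow_eq_pow_iff_cong_ord[OF assms(2)] ord by (simp add: mult_mod_def cong_def mult.commute)
    finally show ?thesis .
  qed
  with k(1) show ?thesis
    by blast
qed

lemma (in group) cyclic_automorphism_conjugate_mult_mod:
  assumes "finite (carrier G)" "cyclic_group G" "f \<in> iso G G"
  shows "\<exists>k\<in>units_Zn (order G). \<exists>\<phi>. bij_betw \<phi> {0..<order G} (carrier G)
           \<and> (\<forall>j\<in>{0..<order G}. f (\<phi> j) = \<phi> (mult_mod (order G) k j))"
proof -
  obtain x where x: "x \<in> carrier G" "subgroup_generated G {x} = G"
    using assms(2) unfolding cyclic_group_def by blast
  have "0 < order G"
    using assms(1) order_gt_0_iff_finite by blast
  have "f \<in> hom G G" and bij_f: "bij_betw f (carrier G) (carrier G)"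
    using assms(3) by (simp_all add: iso_def)
  then obtain k where k: "k < order G" "\<forall>j. f (x [^] j) = x [^] mult_mod (order G) k j"
    using endomorphism_of_cyclic_eq_mult_mod[OF assms(1) x] by blast
  let ?\<phi> = "\<lambda>j. x [^] j"
  have bij: "bij_betw ?\<phi> {0..<order G} (carrier G)"
    using bij_betw_pow_generator[OF assms(1) x] .
  have conj: "\<forall>j\<in>{0..<order G}. f (?\<phi> j) = ?\<phi> (mult_mod (order G) k j)"
    using k(2) by blast
  have "bij_betw (mult_mod (order G) k) {0..<order G} {0..<order G}"
    using bij_betw_conjugate[OF bij bij_f mult_mod_image_subset[OF \<open>0 < order G\<close>] conj] .
  then have "k \<in> units_Zn (order G)"
    using bij_betw_mult_mod_iff[OF \<open>0 < order G\<close>] k(1) by (simp add: units_Zn_def)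
  with bij conj show ?thesis
    by blast
qed

definition transport_Zmod :: "nat \<Rightarrow> (nat \<Rightarrow> 'a) \<Rightarrow> 'a set \<Rightarrow> 'a monoid" where
  "transport_Zmod n \<phi> A =
     \<lparr>carrier = A,
      mult = \<lambda>a b. \<phi> ((inv_into {0..<n} \<phi> a + inv_into {0..<n} \<phi> b) mod n),
      one = \<phi> 0\<rparr>"

context
  fixes n :: nat and \<phi> :: "nat \<Rightarrow> 'a" and A :: "'a set"
  assumes pos: "0 < n" and \<phi>: "bij_betw \<phi> {0..<n} A"
begin

lemma carrier_transport_Zmod [simp]: "carrier (transport_Zmod n \<phi> A) = A"
  and one_transport_Zmod [simp]: "one (transport_Zmod n \<phi> A) = \<phi> 0"
  by (simp_all add: transport_Zmod_def)

lemma mult_transport_Zmod: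
  "i < n \<Longrightarrow> j < n \<Longrightarrow> \<phi> i \<otimes>\<^bsub>transport_Zmod n \<phi> A\<^esub> \<phi> j = \<phi> ((i + j) mod n)"
  using \<phi> by (simp add: transport_Zmod_def bij_betw_inv_into_left)

lemma transport_Zmod_cases:
  assumes "a \<in> A"
  obtains i where "i < n" "a = \<phi> i"
  using assms bij_betw_imp_surj_on[OF \<phi>] by (metis atLeastLessThan_iff imageE)

lemma group_transport_Zmod: "group (transport_Zmod n \<phi> A)"
proof (rule groupI)
  let ?G = "transport_Zmod n \<phi> A"
  fix a b assume "a \<in> carrier ?G" "b \<in> carrier ?G"
  then show "a \<otimes>\<^bsub>?G\<^esub> b \<in> carrier ?G"
    by (auto simp: mult_transport_Zmod bij_betw_apply[OF \<phi>] pos elim!: transport_Zmod_cases)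
next
  let ?G = "transport_Zmod n \<phi> A"
  fix a b c assume "a \<in> carrier ?G" "b \<in> carrier ?G" "c \<in> carrier ?G"
  then show "a \<otimes>\<^bsub>?G\<^esub> b \<otimes>\<^bsub>?G\<^esub> c = a \<otimes>\<^bsub>?G\<^esub> (b \<otimes>\<^bsub>?G\<^esub> c)"
    by (auto simp: mult_transport_Zmod pos mod_add_left_eq mod_add_right_eq add.assoc
             elim!: transport_Zmod_cases)
next
  let ?G = "transport_Zmod n \<phi> A"
  fix a assume "a \<in> carrier ?G"
  then obtain i where i: "i < n" "a = \<phi> i"
    by (auto elim: transport_Zmod_cases)
  show "\<one>\<^bsub>?G\<^esub> \<otimes>\<^bsub>?G\<^esub> a = a"
    using i pos by (simp add: mult_transport_Zmod)
  have "((n - i) mod n + i) mod n = 0"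
    using i(1) by (simp add: mod_add_left_eq)
  then have "\<phi> ((n - i) mod n) \<otimes>\<^bsub>?G\<^esub> a = \<one>\<^bsub>?G\<^esub>"
    using i pos by (simp add: mult_transport_Zmod)
  then show "\<exists>b\<in>carrier ?G. b \<otimes>\<^bsub>?G\<^esub> a = \<one>\<^bsub>?G\<^esub>"
    using pos bij_betw_apply[OF \<phi>] by auto
qed (simp add: bij_betw_apply[OF \<phi>] pos)

lemma pow_transport_Zmod: "\<phi> (1 mod n) [^]\<^bsub>transport_Zmod n \<phi> A\<^esub> (j :: nat) = \<phi> (j mod n)"
proof (induction j)
  case (Suc j)
  then show ?case
    using pos by (simp add: mult_transport_Zmod mod_Suc_eq)
qed simp

lemma cyclic_group_transport_Zmod: "cyclic_group (transport_Zmod n \<phi> A)"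
proof -
  let ?G = "transport_Zmod n \<phi> A" and ?x = "\<phi> (1 mod n)"
  interpret group ?G
    by (rule group_transport_Zmod)
  have x: "?x \<in> carrier ?G"
    using pos bij_betw_apply[OF \<phi>] by simp
  have "a \<in> range (\<lambda>i::int. ?x [^]\<^bsub>?G\<^esub> i)" if "a \<in> A" for a
  proof -
    obtain j where "j < n" "a = \<phi> j"
      using \<open>a \<in> A\<close> by (rule transport_Zmod_cases)
    then have "a = ?x [^]\<^bsub>?G\<^esub> j"
      using pow_transport_Zmod[of j] by simp
    then have "a = ?x [^]\<^bsub>?G\<^esub> int j"
      by (simp add: int_pow_int)
    then show ?thesis
      by blast
  qed
  then have "carrier ?G = range (\<lambda>i::int. ?x [^]\<^bsub>?G\<^esub> i)"
    using int_pow_closed[OF x] by auto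
  then show ?thesis
    using cyclic_group x by blast
qed

lemma iso_transport_Zmod:
  assumes "bij_betw f A A" "\<forall>j\<in>{0..<n}. f (\<phi> j) = \<phi> (mult_mod n k j)"
  shows "f \<in> iso (transport_Zmod n \<phi> A) (transport_Zmod n \<phi> A)"
proof -
  let ?G = "transport_Zmod n \<phi> A"
  have "f \<in> hom ?G ?G"
  proof (rule homI)
    fix a assume "a \<in> carrier ?G"
    then show "f a \<in> carrier ?G"
      using bij_betw_apply[OF assms(1)] by simp
  next
    fix a b assume "a \<in> carrier ?G" "b \<in> carrier ?G"
    then obtain i j where ij: "i < n" "a = \<phi> i" "j < n" "b = \<phi> j"
      by (auto elim!: transport_Zmod_cases)
    have "f (a \<otimes>\<^bsub>?G\<^esub> b) = \<phi> ((i + j) mod n * k mod n)"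
      using ij assms(2) pos by (simp add: mult_transport_Zmod mult_mod_def)
    also have "(i + j) mod n * k mod n = (i * k mod n + j * k mod n) mod n"
      by (simp add: mod_mult_left_eq mod_add_eq distrib_right)
    also have "\<phi> \<dots> = f a \<otimes>\<^bsub>?G\<^esub> f b"
      using ij assms(2) pos by (simp add: mult_transport_Zmod mult_mod_def)
    finally show "f (a \<otimes>\<^bsub>?G\<^esub> b) = f a \<otimes>\<^bsub>?G\<^esub> f b" .
  qed
  then show ?thesis
    using assms(1) by (simp add: iso_def)
qed

lemma ex_cyclic_group_with_automorphism:
  assumes "bij_betw f A A" "\<forall>j\<in>{0..<n}. f (\<phi> j) = \<phi> (mult_mod n k j)"
  shows "\<exists>(mult :: 'a \<Rightarrow> 'a \<Rightarrow> 'a) (e :: 'a).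
           let G = \<lparr>carrier = A, mult = mult, one = e\<rparr> in
           group G \<and> cyclic_group G \<and> f \<in> iso G G"
proof (intro exI)
  let ?G = "transport_Zmod n \<phi> A"
  have G: "\<lparr>carrier = A, mult = mult ?G, one = one ?G\<rparr> = ?G"
    by (simp add: transport_Zmod_def)
  show "let G = \<lparr>carrier = A, mult = mult ?G, one = one ?G\<rparr> in
          group G \<and> cyclic_group G \<and> f \<in> iso G G"
    unfolding Let_def G
    using group_transport_Zmod cyclic_group_transport_Zmod iso_transport_Zmod[OF assms] by blast
qed

end

lemma cyclic_automorphism_iff_conjugate_mult_mod:
  fixes A :: "'a set"
  assumes "finite A" "card A = n" "0 < n" "bij_betw f A A"
  shows "(\<exists>(mult :: 'a \<Rightarrow> 'a \<Rightarrow> 'a) (e :: 'a).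
            let G = \<lparr>carrier = A, mult = mult, one = e\<rparr> in
            group G \<and> cyclic_group G \<and> f \<in> iso G G)
    \<longleftrightarrow> (\<exists>k\<in>units_Zn n. \<exists>\<phi>. bij_betw \<phi> {0..<n} A \<and> (\<forall>j\<in>{0..<n}. f (\<phi> j) = \<phi> (mult_mod n k j)))"
    (is "?structure \<longleftrightarrow> ?conjugate")
proof
  assume ?structure
  then obtain M e where "let G = \<lparr>carrier = A, mult = M, one = e\<rparr> in
                           group G \<and> cyclic_group G \<and> f \<in> iso G G"
    by blast
  moreover define G where "G = \<lparr>carrier = A, mult = M, one = e\<rparr>"
  ultimately have G: "group G" "cyclic_group G" "f \<in> iso G G"
    by (simp_all add: Let_def)
  moreover have "carrier G = A" "order G = n"
    using assms(2) by (simp_all add: G_def order_def)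
  ultimately show ?conjugate
    using group.cyclic_automorphism_conjugate_mult_mod[OF G(1)] assms(1) by simp
next
  assume ?conjugate
  then show ?structure
    using ex_cyclic_group_with_automorphism[OF assms(3) _ assms(4)] by blast
qed

theorem theorem2p1:
  fixes A :: "'a set" and f :: "'a \<Rightarrow> 'a" and n :: nat
  assumes "finite A" and "A \<noteq> {}" and "card A = n" and "bij_betw f A A"
  shows "(\<exists>(mult :: 'a \<Rightarrow> 'a \<Rightarrow> 'a) (e :: 'a).
            let G = \<lparr>carrier = A, mult = mult, one = e\<rparr> in
            group G \<and> cyclic_group G \<and> f \<in> iso G G)
    \<longleftrightarrow>
    ((\<forall>a\<in>A. f a = a) \<or>
     (\<exists>k \<in> units_Zn n. k \<noteq> 1 mod n \<and>
        (let l = ord n k in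
         \<forall>m. real (num_cycles A f m) =
              (if m = l then real (unit_index n k) + Lcount n k l
               else if m = 1 then Lcount n k 1 + 1
               else if m dvd l then Lcount n k m
               else 0))))"
proof -
  have "0 < n"
    unfolding assms(3)[symmetric] using assms(1,2) by (simp add: card_gt_0_iff)
  then have "1 mod n \<in> units_Zn n"
    by (simp add: units_Zn_def)
  have conjugate_iff: "(\<exists>\<phi>. bij_betw \<phi> {0..<n} A \<and> (\<forall>j\<in>{0..<n}. f (\<phi> j) = \<phi> (mult_mod n k j)))
      \<longleftrightarrow> (if k = 1 mod n then \<forall>a\<in>A. f a = a
          else let l = ord n k in \<forall>m. real (num_cycles A f m) =
              (if m = l then real (unit_index n k) + Lcount n k l
               else if m = 1 then Lcount n k 1 + 1
               else if m dvd l then Lcount n k m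
               else 0))"
    if "k \<in> units_Zn n" for k
  proof (cases "k = 1 mod n")
    case False
    then have "coprime k n" "\<not> [k = 1] (mod n)"
      using that by (auto simp: units_Zn_def cong_def)
    with False show ?thesis
      unfolding conjugate_mult_mod_unit_iff[OF assms(1,3,4) that] Let_def
      by (simp flip: num_cycles_mult_mod)
  next
    case True
    then show ?thesis
      unfolding conjugate_mult_mod_unit_iff[OF assms(1,3,4) that] by (simp only: if_P)
  qed
  have bex_if: "(\<exists>k\<in>S. if k = c then P else Q k) \<longleftrightarrow> P \<or> (\<exists>k\<in>S. k \<noteq> c \<and> Q k)"
    if "c \<in> S" for S c P Q
    using that by auto
  show ?thesis
    unfolding cyclic_automorphism_iff_conjugate_mult_mod[OF assms(1,3) \<open>0 < n\<close> assms(4)]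
    by (rule trans[OF bex_cong[OF refl conjugate_iff] bex_if[OF \<open>1 mod n \<in> units_Zn n\<close>]])
qed

end
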